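(* Let $3\leq m\leq n$, $\ell=m-1$, $p=(m-1)n$ and $Y\in\mathbb{R}^{n\times n\times\ell}$. If $\dim U(Y)=p$, then $Y\in\mathfrak{M}$.
   Context: For $Y=(Y_1;\ldots;Y_\ell)\in\mathbb{R}^{n\times n\times\ell}$ and $\mathbf{a}=(a_1,\ldots,a_\ell,a_m)^\top\in\mathbb{R}^m$, $M(\mathbf{a},Y)=\sum_{k=1}^\ell a_kY_k-a_mE_n$. Let $\psi(\mathbf{a},Y)\in\mathbb{R}^n$ have $j$-th entry $(-1)^{n+j}\det M(\mathbf{a},Y)_{n,j}$, where $M_{n,j}$ denotes the matrix obtained by deleting row $n$ and column $j$. Let $\check{\mathbf a}=(a_1,\ldots,a_\ell)^\top$ and $\check{\mathbf a}\otimes\psi(\mathbf a,Y)=(a_1\psi(\mathbf a,Y)^\top,\ldots,a_\ell\psi(\mathbf a,Y)^\top)^\top\in\mathbb{R}^p$. $U(Y)$ is the linear span of $\{\check{\mathbf a}\otimes\psi(\mathbf a,Y)\mid \mathbf a\in\mathbb{R}^m,\ \det M(\mathbf a,Y)=0\}$. $\mathfrak{M}$ is the set of $Y$ for which there exist a real $m\times p$ matrix $(x_{ij})$ and a real $n\times p$ matrix $A=(\mathbf{a}_1,\ldots,\mathbf{a}_p)$ with $(x_{1j}Y_1+\cdots+x_{\ell j}Y_\ell-x_{mj}E_n)\mathbf{a}_j=\mathbf{0}$ for all $j$ and $\begin{pmatrix}AD_1\\ \vdots\\ AD_\ell\end{pmatrix}$ nonsingular, where $D_k=\operatorname{diag}(x_{k1},\ldots,x_{kp})$.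 *)

theory Defs
  imports "Jordan_Normal_Form.DL_Rank"
begin

text \<open>Conventions: indices are 0-based. The tensor Y = (Y_1;...;Y_l) is given by
  matrices Y k (k < l), each n x n real. A vector a in R^m (m = l+1) has entries
  a$0,...,a$(l-1) (= a_1,...,a_l) and a$l (= a_m).\<close>

definition Mmat :: "nat \<Rightarrow> nat \<Rightarrow> (nat \<Rightarrow> real mat) \<Rightarrow> real vec \<Rightarrow> real mat" where
  "Mmat n l Y a = mat n n (\<lambda>(i,j). (\<Sum>k<l. a $ k * Y k $$ (i,j))) - a $ l \<cdot>\<^sub>m 1\<^sub>m n"

text \<open>psi(a,Y): j-th entry (1-based j) is (-1)^(n+j) det M(a,Y)_{n,j};
  with 0-based j the sign is (-1)^(n+j+1) and row n is row index n-1.\<close>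
definition psi :: "nat \<Rightarrow> nat \<Rightarrow> (nat \<Rightarrow> real mat) \<Rightarrow> real vec \<Rightarrow> real vec" where
  "psi n l Y a = vec n (\<lambda>j. (-1) ^ (n + j + 1) * det (mat_delete (Mmat n l Y a) (n - 1) j))"

definition kron_psi :: "nat \<Rightarrow> nat \<Rightarrow> (nat \<Rightarrow> real mat) \<Rightarrow> real vec \<Rightarrow> real vec" where
  "kron_psi n l Y a = vec (l * n) (\<lambda>i. a $ (i div n) * psi n l Y a $ (i mod n))"

definition Ugen :: "nat \<Rightarrow> nat \<Rightarrow> (nat \<Rightarrow> real mat) \<Rightarrow> real vec set" where
  "Ugen n l Y = {kron_psi n l Y a | a. a \<in> carrier_vec (l + 1) \<and> det (Mmat n l Y a) = 0}"

definition dimU :: "nat \<Rightarrow> nat \<Rightarrow> (nat \<Rightarrow> real mat) \<Rightarrow> nat" where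
  "dimU n l Y = vectorspace.dim class_ring
     ((module_vec TYPE(real) (l * n))
        \<lparr>carrier := LinearCombinations.module.span class_ring (module_vec TYPE(real) (l * n)) (Ugen n l Y)\<rparr>)"

definition Dmat :: "nat \<Rightarrow> real mat \<Rightarrow> nat \<Rightarrow> real mat" where
  "Dmat p X k = mat p p (\<lambda>(i,j). if i = j then X $$ (k, i) else 0)"

definition stackAD :: "nat \<Rightarrow> nat \<Rightarrow> nat \<Rightarrow> real mat \<Rightarrow> real mat \<Rightarrow> real mat" where
  "stackAD n l p X A = mat (l * n) p (\<lambda>(r,j). (A * Dmat p X (r div n)) $$ (r mod n, j))"

definition in_frakM :: "nat \<Rightarrow> nat \<Rightarrow> (nat \<Rightarrow> real mat) \<Rightarrow> bool" where
  "in_frakM n l Y = (let p = l * n in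
     \<exists>X A. X \<in> carrier_mat (l + 1) p \<and> A \<in> carrier_mat n p \<and>
       (\<forall>j<p. Mmat n l Y (col X j) *\<^sub>v col A j = 0\<^sub>v n) \<and>
       invertible_mat (stackAD n l p X A))"

end

theory Submission
  imports Defs
begin

(* The generators of U(Y) are the vectors  check(a) (x) psi(a,Y)  with
   det M(a,Y) = 0.  If dim U(Y) = p, some p of these generators are linearly independent
   (a maximal independent subset of a spanning set is a basis, even when the spanning
   set is infinite).  Write them as  check(a_j) (x) psi(a_j,Y), j = 1..p, and take the
   a_j as the columns of X and the psi(a_j,Y) as the columns of A.
   (1) psi(a,Y) is, up to indexing, the last column of the adjugate of M(a,Y); since
       M adj(M) = det(M) I = 0, it lies in the kernel of M(a,Y).
   (2) The stacked matrix (A D_1; ...; A D_l) has j-th column  check(a_j) (x) psi(a_j,Y),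
       so it is the square matrix of the p independent generators, hence invertible. *)

text \<open>The dimension of the span of an arbitrary (possibly infinite) set S equals the size
  of any finite maximal linearly independent subset of S.  The library only states this
  for finite S; the generating set of U(Y) is infinite in general.\<close>

lemma (in vectorspace) dim_span_eq_card_maximal_indpt:
  assumes S: "S \<subseteq> carrier V"
    and fin: "finite U"
    and max: "maximal U (\<lambda>T. T \<subseteq> S \<and> lin_indpt T)"
  shows "vectorspace.dim K (span_vs S) = card U"
proof -
  have Uli: "lin_indpt U" and US: "U \<subseteq> S" using max by (auto simp: maximal_def)
  then have U_span: "U \<subseteq> span S" using in_own_span[OF S] by blast
  have li_sub: "LinearCombinations.module.lin_indpt K (span_vs S) U"
    using module.span_li_not_depend(2)[OF U_span] Uli S span_is_submodule by blast
  have S_in_spanU: "S \<subseteq> span U"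
  proof
    fix s assume s: "s \<in> S"
    show "s \<in> span U"
    proof (rule ccontr)
      assume s_out: "s \<notin> span U"
      have "s \<notin> U" using s_out US S span_mem by auto
      have "U \<subseteq> carrier V" "s \<in> carrier V" using US s S by auto
      then have "lin_indpt (U \<union> {s})"
        using lin_dep_iff_in_span[OF _ Uli _ \<open>s \<notin> U\<close>] s_out by blast
      moreover have "U \<union> {s} \<subseteq> S" using s US by auto
      ultimately show False using max \<open>s \<notin> U\<close> unfolding maximal_def by blast
    qed
  qed
  have "span U \<subseteq> span S" using US by (rule span_is_monotone)
  moreover have "span S \<subseteq> span U"
    using S_in_spanU span_is_submodule US S by (intro span_is_subset) auto
  ultimately have "span U = span S" by (rule subset_antisym)
  then have spans: "LinearCombinations.module.span K (span_vs S) U = span S"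
    using module.span_li_not_depend[OF U_span] S span_is_submodule by simp
  have span_vs: "vectorspace K (span_vs S)"
    using field.field_axioms vectorspace_def submodule_is_module[OF span_is_submodule[OF S]]
    by metis
  then have "vectorspace.basis K (span_vs S) U"
    by (simp add: vectorspace.basis_def spans U_span li_sub)
  then show ?thesis using span_vs fin vectorspace.dim_basis by blast
qed

lemma (in vec_space) indpt_list_of_dim_span:
  assumes S: "S \<subseteq> carrier_vec n" and dim: "vectorspace.dim class_ring (span_vs S) = k"
  obtains ws where "set ws \<subseteq> S" "distinct ws" "length ws = k" "lin_indpt (set ws)"
proof -
  have "\<exists>U. finite U \<and> maximal U (\<lambda>T. T \<subseteq> S \<and> lin_indpt T)"
  proof (rule maximal_exists[of _ n "{}"])
    fix T assume "T \<subseteq> S \<and> lin_indpt T"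
    then show "finite T \<and> card T \<le> n"
      using li_le_dim[OF fin_dim, of T] S dim_is_n by auto
  qed (simp add: lin_dep_def)
  then obtain U where fin: "finite U" and max: "maximal U (\<lambda>T. T \<subseteq> S \<and> lin_indpt T)"
    by blast
  have "card U = k" using dim_span_eq_card_maximal_indpt[OF S fin max] dim by simp
  moreover obtain ws where "set ws = U" "distinct ws" using finite_distinct_list[OF fin] by blast
  moreover have "U \<subseteq> S" "lin_indpt U" using max by (auto simp: maximal_def)
  ultimately show ?thesis using that distinct_card by metis
qed

lemma det_nonzero_imp_invertible_mat:
  fixes A :: "'a :: field mat"
  assumes A: "A \<in> carrier_mat k k" and det: "det A \<noteq> 0"
  shows "invertible_mat A"
proof -
  obtain B where "B \<in> carrier_mat k k" "B * A = 1\<^sub>m k" "A * B = 1\<^sub>m k"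
    using det_non_zero_imp_unit[OF A det, of "()"] by (auto simp: Units_def ring_mat_def)
  then show ?thesis using A unfolding invertible_mat_def inverts_mat_def by auto
qed

lemma (in vec_space) invertible_mat_of_indpt_cols:
  assumes ws: "set ws \<subseteq> carrier_vec n" "distinct ws" "length ws = n" "lin_indpt (set ws)"
  shows "invertible_mat (mat_of_cols n ws)"
proof -
  have C: "mat_of_cols n ws \<in> carrier_mat n n" using ws by auto
  have "rank (mat_of_cols n ws) = n"
    using lin_indpt_full_rank[OF C] ws by simp
  then have "det (mat_of_cols n ws) \<noteq> 0" using det_rank_iff[OF C] by simp
  then show ?thesis using det_nonzero_imp_invertible_mat[OF C] by simp
qed

lemma Mmat_carrier: "Mmat n l Y a \<in> carrier_mat n n"
  unfolding Mmat_def by (rule minus_carrier_mat) simp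

lemma psi_carrier: "psi n l Y a \<in> carrier_vec n"
  unfolding psi_def by simp

lemma psi_eq_adj_col:
  assumes "n > 0"
  shows "psi n l Y a = col (adj_mat (Mmat n l Y a)) (n - 1)"
proof -
  let ?M = "Mmat n l Y a"
  have M: "?M \<in> carrier_mat n n" by (rule Mmat_carrier)
  have sign: "(-1::real) ^ (n + j + 1) = (-1) ^ (n - 1 + j)" for j
  proof -
    have "n + j + 1 = (n - 1 + j) + 2" using assms by simp
    then show ?thesis by (simp only: power_add) simp
  qed
  show ?thesis
  proof (rule eq_vecI)
    fix j assume "j < dim_vec (col (adj_mat ?M) (n - 1))"
    then have j: "j < n" using adj_mat(1)[OF M] by simp
    have "psi n l Y a $ j = (-1) ^ (n + j + 1) * det (mat_delete ?M (n - 1) j)"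
      using j by (simp add: psi_def)
    also have "\<dots> = (-1) ^ (n - 1 + j) * det (mat_delete ?M (n - 1) j)"
      by (simp only: sign)
    also have "\<dots> = col (adj_mat ?M) (n - 1) $ j"
      using j M assms by (simp add: adj_mat_def cofactor_def col_def)
    finally show "psi n l Y a $ j = col (adj_mat ?M) (n - 1) $ j" .
  qed (use adj_mat(1)[OF M] in \<open>simp add: psi_def\<close>)
qed

text \<open>Since M adj(M) = det(M) I, the vector psi(a,Y) is a kernel vector of M(a,Y)
  whenever M(a,Y) is singular.\<close>

lemma psi_in_kernel:
  assumes "det (Mmat n l Y a) = 0" and "n > 0"
  shows "Mmat n l Y a *\<^sub>v psi n l Y a = 0\<^sub>v n"
proof -
  let ?M = "Mmat n l Y a"
  have M: "?M \<in> carrier_mat n n" by (rule Mmat_carrier)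
  have "?M *\<^sub>v col (adj_mat ?M) (n - 1) = col (?M * adj_mat ?M) (n - 1)"
    using M adj_mat(1)[OF M] assms(2) by (subst col_mult2[of _ n n _ n]) auto
  also have "\<dots> = 0\<^sub>v n" using adj_mat(2)[OF M] assms by (auto simp: col_def)
  finally show ?thesis using psi_eq_adj_col[OF assms(2)] by simp
qed

lemma mult_Dmat_entry:
  fixes A X :: "real mat"
  assumes A: "A \<in> carrier_mat n p" and i: "i < n" and j: "j < p"
  shows "(A * Dmat p X k) $$ (i, j) = A $$ (i, j) * X $$ (k, j)"
proof -
  have "(A * Dmat p X k) $$ (i, j) = (\<Sum>t<p. A $$ (i, t) * Dmat p X k $$ (t, j))"
    using A i j by (simp add: Dmat_def scalar_prod_def row_def col_def atLeast0LessThan)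
  also have "\<dots> = (\<Sum>t<p. if t = j then A $$ (i, j) * X $$ (k, j) else 0)"
    using j by (intro sum.cong) (auto simp: Dmat_def)
  finally show ?thesis using j by simp
qed

lemma stackAD_eq_mat_of_kron_psi:
  assumes "n > 0" and len: "length as = p"
  shows "stackAD n l p (mat_of_cols (l + 1) as) (mat_of_cols n (map (psi n l Y) as))
         = mat_of_cols (l * n) (map (kron_psi n l Y) as)"
    (is "stackAD n l p ?X ?A = ?K")
proof (rule eq_matI)
  fix r j assume "r < dim_row ?K" "j < dim_col ?K"
  then have r: "r < l * n" and j: "j < p" using len by auto
  have rn: "r mod n < n" using assms(1) by simp
  have rd: "r div n < l" using r by (simp add: less_mult_imp_div_less)
  have A: "?A \<in> carrier_mat n p" using mat_of_cols_carrier(1) len by (metis length_map)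
  have "stackAD n l p ?X ?A $$ (r, j) = ?A $$ (r mod n, j) * ?X $$ (r div n, j)"
    unfolding stackAD_def using r j mult_Dmat_entry[OF A rn j] by simp
  also have "\<dots> = as ! j $ (r div n) * psi n l Y (as ! j) $ (r mod n)"
    using rn rd j len by (simp add: mat_of_cols_def)
  also have "\<dots> = ?K $$ (r, j)"
    using r j len by (simp add: mat_of_cols_def kron_psi_def)
  finally show "stackAD n l p ?X ?A $$ (r, j) = ?K $$ (r, j)" .
qed (use len in \<open>simp_all add: stackAD_def\<close>)

lemma generators_of_full_dimU:
  assumes "dimU n l Y = l * n"
  obtains as where "set as \<subseteq> {a \<in> carrier_vec (l + 1). det (Mmat n l Y a) = 0}"
    and "length as = l * n"
    and "invertible_mat (mat_of_cols (l * n) (map (kron_psi n l Y) as))"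
proof -
  interpret V: vec_space "TYPE(real)" "l * n" .
  define Z where "Z = {a \<in> carrier_vec (l + 1). det (Mmat n l Y a) = 0}"
  have gens: "Ugen n l Y = kron_psi n l Y ` Z" unfolding Ugen_def Z_def by blast
  have carrier: "Ugen n l Y \<subseteq> carrier_vec (l * n)" unfolding Ugen_def kron_psi_def by auto
  moreover have "vectorspace.dim class_ring (V.span_vs (Ugen n l Y)) = l * n"
    using assms unfolding dimU_def .
  ultimately obtain us where us: "set us \<subseteq> Ugen n l Y" "distinct us" "length us = l * n"
      "V.lin_indpt (set us)"
    by (rule V.indpt_list_of_dim_span)
  have "us \<in> lists (kron_psi n l Y ` Z)" using us(1) gens by (simp add: lists_eq_set)
  then have "us \<in> map (kron_psi n l Y) ` lists Z" by (simp only: lists_image)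
  then obtain as where "set as \<subseteq> Z" and "us = map (kron_psi n l Y) as"
    by (auto simp: lists_eq_set)
  moreover have "invertible_mat (mat_of_cols (l * n) us)"
    using V.invertible_mat_of_indpt_cols us carrier by blast
  ultimately show ?thesis using that us(3) unfolding Z_def by simp
qed

theorem mainTheorem14:
  fixes n m l p :: nat and Y :: "nat \<Rightarrow> real mat"
  assumes "3 \<le> m" and "m \<le> n" and "l = m - 1" and "p = (m - 1) * n"
    and "\<forall>k<l. Y k \<in> carrier_mat n n"
    and "dimU n l Y = p"
  shows "in_frakM n l Y"
proof -
  have n: "n > 0" and p: "p = l * n" using assms(1-4) by auto
  obtain as where as: "set as \<subseteq> {a \<in> carrier_vec (l + 1). det (Mmat n l Y a) = 0}"
    and len: "length as = p" and inv: "invertible_mat (mat_of_cols p (map (kron_psi n l Y) as))"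
    using generators_of_full_dimU assms(6) unfolding p by blast
  define X where "X = mat_of_cols (l + 1) as"
  define A where "A = mat_of_cols n (map (psi n l Y) as)"
  have "Mmat n l Y (col X j) *\<^sub>v col A j = 0\<^sub>v n" if j: "j < p" for j
  proof -
    have "as ! j \<in> set as" using j len by simp
    then have "as ! j \<in> carrier_vec (l + 1)" and "det (Mmat n l Y (as ! j)) = 0"
      using as by auto
    moreover have "col X j = as ! j" "col A j = psi n l Y (as ! j)"
      using calculation(1) j len unfolding X_def A_def by (simp_all add: psi_carrier)
    ultimately show ?thesis using psi_in_kernel n by simp
  qed
  moreover have "invertible_mat (stackAD n l p X A)"
    using inv stackAD_eq_mat_of_kron_psi[OF n len] unfolding X_def A_def p by simp
  moreover have "X \<in> carrier_mat (l + 1) p" "A \<in> carrier_mat n p"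
    using len unfolding X_def A_def by (metis mat_of_cols_carrier(1) length_map)+
  ultimately show ?thesis
    unfolding in_frakM_def Let_def p[symmetric] by (intro exI[of _ X] exI[of _ A]) simp
qed

end
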